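(* For every complex number $c\neq 0$ (with $\sinh c\ne 0$), $$-\frac{1}{\pi}\sum_{k=0}^{\infty}c^{2k+1}\sum_{j=1}^{k}\frac{(-1)^j(2\pi)^{-2j}}{(2k+1-2j)!}\zeta(2j+1)=\sinh(c)\int_{0}^{1}\left(\frac{\sinh(cu)}{\sinh c}-u\right)\cot(\pi u)\,du,$$ $$\frac{1}{\pi}\sum_{k=0}^{\infty}c^{2k+2}\sum_{j=1}^{k}\frac{(-1)^j(2\pi)^{-2j}}{(2k+2-2j)!}\zeta(2j+1)=(1-\cosh c)\int_{0}^{1}\left(\frac{\sinh(cu)}{\sinh c}-u\right)\cot(\pi u)\,du,$$ and consequently $$\frac{1}{\pi}\sum_{k=0}^{\infty}\sum_{j=1}^{k}(-1)^j(2\pi)^{-2j}\zeta(2j+1)\left(-\frac{c^{2k+1}}{(2k+1-2j)!}+\frac{c^{2k+2}}{(2k+2-2j)!}\right)=-(e^{-c}-1)\int_{0}^{1}\left(\frac{\sinh(cu)}{\sinh c}-u\right)\cot(\pi u)\,du.$$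
   Context: $\zeta$ is the Riemann zeta function. Empty inner sums (when $k=0$) are zero. *)

theory Defs
  imports "HOL-Analysis.Analysis"
begin

text \<open>Riemann zeta function, defined by its Dirichlet series
  (the defining series converges for Re s > 1; it is only used at s = 2j+1 with j \<ge> 1).\<close>
definition zeta :: "complex \<Rightarrow> complex" where
  "zeta s = (\<Sum>n. 1 / (of_nat (Suc n)) powr s)"

end

theory Submission
  imports Defs
begin

(* Expanding sinh(cu) - u sinh c = sum_{n odd} c^n/n! (u^n - u) reduces the integral to the
   cotangent moments I_n = int_0^1 (u^n - u) cot(pi u) du; since |(u^n - u) cot(pi u)| <= n the
   expansion may be integrated term by term.  Each I_n is computed by replacing cot(pi u) with
   its Abel means sum_k 2 r^k sin(2 pi k u): integration by parts turns
   int_0^1 (u^n - u) sin(2 pi k u) du into a finite combination of the k^-(2j+1), summing over k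
   gives polylogarithms Li_(2j+1)(r), and r -> 1 yields zeta(2j+1).  The substitution u -> 1 - u
   relates the integral of the sinh-kernel to that of cosh(cu) - 1 - u (cosh c - 1), which gives
   the second identity; the third is the sum of the first two, as sinh c + 1 - cosh c = 1 - e^-c. *)

lemma sums_integral_dominated:
  fixes f :: "nat \<Rightarrow> 'n::euclidean_space \<Rightarrow> 'm::euclidean_space"
  assumes f: "\<And>k. (f k has_integral I k) S" and h: "h integrable_on S"
    and le: "\<And>N x. x \<in> S \<Longrightarrow> norm (\<Sum>k<N. f k x) \<le> h x"
    and g: "\<And>x. x \<in> S \<Longrightarrow> (\<lambda>k. f k x) sums g x"
  shows "g integrable_on S" "I sums integral S g"
proof -
  have partial: "((\<lambda>x. \<Sum>k<N. f k x) has_integral (\<Sum>k<N. I k)) S" for N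
    by (intro has_integral_sum f) simp
  have "\<And>x. x \<in> S \<Longrightarrow> (\<lambda>N. \<Sum>k<N. f k x) \<longlonglongrightarrow> g x"
    using g by (simp add: sums_def)
  note dc = dominated_convergence[where f = "\<lambda>N x. \<Sum>k<N. f k x", OF _ h le this]
  show "g integrable_on S"
    using partial by (intro dc(1)) blast
  have "(\<lambda>N. integral S (\<lambda>x. \<Sum>k<N. f k x)) \<longlonglongrightarrow> integral S g"
    using partial by (intro dc(2)) blast
  moreover have "integral S (\<lambda>x. \<Sum>k<N. f k x) = (\<Sum>k<N. I k)" for N
    using partial by (rule integral_unique)
  ultimately show "I sums integral S g"
    by (simp add: sums_def)
qed

lemma summable_norm_times_index:
  fixes a :: "nat \<Rightarrow> 'a::real_normed_field" and c :: 'a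
  assumes "\<And>n. norm (a n) \<le> norm c ^ n / fact n"
  shows "summable (\<lambda>n. norm (a n) * real n)"
proof (rule summable_comparison_test[OF _ summable_exp[of "2 * norm c"]])
  have "norm (a n) * real n \<le> norm c ^ n / fact n * 2 ^ n" for n
    using assms less_exp[of n] by (intro mult_mono) (auto intro: less_imp_le)
  then show "\<exists>N. \<forall>n\<ge>N. norm (norm (a n) * real n) \<le> inverse (fact n) * (2 * norm c) ^ n"
    by (auto simp: power_mult_distrib divide_inverse mult_ac)
qed

lemma sums_odd_terms:
  assumes "\<And>n. even n \<Longrightarrow> f n = 0" and "f sums s"
  shows "(\<lambda>k. f (2*k+1)) sums s"
proof -
  have "f n = 0" if "n \<notin> range (\<lambda>k. 2*k+1)" for n
    using that assms(1) odd_two_times_div_two_succ[of n] by (metis rangeI)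
  then show ?thesis
    using sums_mono_reindex[of "\<lambda>k. 2*k+1" f] assms(2) by (simp add: strict_mono_def)
qed

lemma sums_even_terms_Suc:
  assumes "f 0 = 0" and "\<And>n. odd n \<Longrightarrow> f n = 0" and "f sums s"
  shows "(\<lambda>k. f (2*k+2)) sums s"
proof -
  have "f n = 0" if "n \<notin> range (\<lambda>k. 2*k+2)" for n
  proof (cases "odd n \<or> n = 0")
    case False
    then have "n = 2 * ((n - 2) div 2) + 2" by presburger
    with that show ?thesis by blast
  qed (use assms in auto)
  then show ?thesis
    using sums_mono_reindex[of "\<lambda>k. 2*k+2" f] assms(3) by (simp add: strict_mono_def)
qed

lemma has_integral_01_of_deriv:
  fixes F f :: "real \<Rightarrow> real"
  assumes "\<And>x. (F has_real_derivative f x) (at x)"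
  shows "(f has_integral (F 1 - F 0)) {0..1}"
  by (rule fundamental_theorem_of_calculus)
     (auto simp: has_real_derivative_iff_has_vector_derivative[symmetric]
           intro: has_field_derivative_at_within assms)

lemma integral_reflect_interval:
  fixes g :: "real \<Rightarrow> 'a::banach"
  assumes "g integrable_on {a..b}"
  shows "integral {a..b} (\<lambda>u. g (a + b - u)) = integral {a..b} g"
proof -
  have "(g has_integral integral {a..b} g) (cbox a b)"
    using assms by (simp add: has_integral_integral)
  from has_integral_affinity[OF this, of "-1" "a + b"]
  have "((\<lambda>x. g (a + b - x)) has_integral integral {a..b} g) ((\<lambda>x. - x + (a + b)) ` cbox a b)"
    by simp
  moreover have "(\<lambda>x::real. - x + (a + b)) ` cbox a b = {a..b}"
    by (auto simp: image_iff intro!: bexI[of _ "a + b - _"])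
  ultimately show ?thesis
    by (simp add: integral_unique)
qed

section \<open>A bound for the cotangent kernel\<close>

lemma concave_on_sin: "concave_on {0..pi} sin"
  unfolding concave_on_def
  by (rule f''_ge0_imp_convex[where f' = "\<lambda>x. - cos x" and f'' = sin])
     (auto intro!: derivative_eq_intros sin_ge_zero)

lemma sin_pi_ge_linear:
  fixes u :: real assumes "0 \<le> u" "u \<le> 1/2"
  shows "2 * u \<le> sin (pi * u)"
  using concave_onD[OF concave_on_sin, of "2*u" 0 "pi/2"] assms by (simp add: mult.commute)

lemma sin_pi_ge_quadratic:
  fixes u :: real assumes "0 \<le> u" "u \<le> 1"
  shows "2 * u * (1 - u) \<le> sin (pi * u)"
proof (cases "u \<le> 1/2")
  case True
  then show ?thesis
    using sin_pi_ge_linear[of u] assms mult_left_le[of "1 - u" "2 * u"] by simp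
next
  case False
  have "sin (pi * u) = sin (pi * (1 - u))" by (simp add: right_diff_distrib sin_diff)
  then show ?thesis
    using sin_pi_ge_linear[of "1 - u"] False assms mult_left_le[of u "2 * (1 - u)"]
    by (simp add: mult.commute mult.left_commute)
qed

lemma abs_pow_diff_cot_le:
  fixes u :: real assumes "0 \<le> u" "u \<le> 1" "n \<ge> 1"
  shows "\<bar>(u ^ n - u) * cot (pi * u)\<bar> \<le> real n"
proof (cases "u = 0 \<or> u = 1")
  case True
  then show ?thesis by auto
next
  case False
  then have u: "0 < u" "u < 1" using assms by auto
  have sin_pos: "sin (pi * u) > 0" using u by (intro sin_gt_zero) auto
  have "1 + real (n - 1) * (u - 1) \<le> (1 + (u - 1)) ^ (n - 1)"
    by (rule Bernoulli_inequality) (use u in auto)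
  then have Bernoulli: "1 - u ^ (n - 1) \<le> real (n - 1) * (1 - u)" by (simp add: algebra_simps)
  have "u ^ n = u * u ^ (n - 1)" using assms(3) by (cases n) auto
  moreover have "u ^ (n - 1) \<le> 1" using u by (simp add: power_le_one)
  ultimately have "\<bar>u ^ n - u\<bar> = u * (1 - u ^ (n - 1))"
    using u by (simp add: algebra_simps)
  also have "\<dots> \<le> u * (real (n - 1) * (1 - u))" using Bernoulli u by (intro mult_left_mono) auto
  finally have num: "\<bar>u ^ n - u\<bar> \<le> real (n - 1) / 2 * (2 * u * (1 - u))" by (simp add: algebra_simps)
  have "\<bar>(u ^ n - u) * cot (pi * u)\<bar> \<le> real (n - 1) / 2 * (2 * u * (1 - u)) * (1 / sin (pi * u))"
    unfolding abs_mult using sin_pos u num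
    by (intro mult_mono) (auto simp: cot_def abs_divide divide_right_mono)
  also have "\<dots> = real (n - 1) / 2 * (2 * u * (1 - u) / sin (pi * u))" by simp
  also have "\<dots> \<le> real (n - 1) / 2 * 1"
    using sin_pi_ge_quadratic[of u] sin_pos u by (intro mult_left_mono) auto
  also have "\<dots> \<le> real n" by simp
  finally show ?thesis .
qed

section \<open>Polynomial moments of sine\<close>

definition sin_moment :: "real \<Rightarrow> nat \<Rightarrow> real" where
  "sin_moment a m = - (\<Sum>j<(m+1) div 2. (-1)^j * fact m / (fact (m - 2*j) * a^(2*j+1)))"

lemma sin_moment_Suc_Suc:
  assumes "a \<noteq> 0"
  shows "sin_moment a (m + 2) = - 1 / a - real ((m + 2) * (m + 1)) / a^2 * sin_moment a m"
proof -
  define t where "t m j = ((-1)^j * fact m / (fact (m - 2*j) * a^(2*j+1)) :: real)" for m j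
  have shift: "t (m + 2) (Suc j) = - (real ((m + 2) * (m + 1)) / a^2) * t m j" for j
  proof -
    have "(fact (m + 2) :: real) = real ((m + 2) * (m + 1)) * fact m"
      by (simp add: algebra_simps)
    then show ?thesis using assms
      by (simp add: t_def field_simps power_add power2_eq_square)
  qed
  have "sin_moment a (m + 2) = - (\<Sum>j<Suc ((m + 1) div 2). t (m + 2) j)"
    by (simp add: sin_moment_def t_def)
  also have "\<dots> = - (t (m + 2) 0 + (\<Sum>j<(m + 1) div 2. t (m + 2) (Suc j)))"
    by (subst sum.lessThan_Suc_shift) simp
  also have "(\<Sum>j<(m + 1) div 2. t (m + 2) (Suc j)) =
      - (real ((m + 2) * (m + 1)) / a^2) * (\<Sum>j<(m + 1) div 2. t m j)"
    unfolding shift by (rule sum_distrib_left[symmetric])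
  also have "t (m + 2) 0 = 1 / a" by (simp add: t_def)
  finally show ?thesis by (simp add: sin_moment_def t_def)
qed

lemma has_integral_sin_moment:
  assumes a: "a \<noteq> 0" "sin a = 0" "cos a = 1"
  shows "((\<lambda>u. u^m * sin (a*u)) has_integral sin_moment a m) {0..1}"
proof (induction m rule: nat_induct2)
  case 0
  have "((\<lambda>u. sin (a*u)) has_integral ((- cos (a*1) / a) - (- cos (a*0) / a))) {0..1}"
    by (rule has_integral_01_of_deriv) (use a in \<open>auto intro!: derivative_eq_intros\<close>)
  then show ?case using a by (simp add: sin_moment_def)
next
  case 1
  let ?F = "\<lambda>u. - (u * cos (a*u)) / a + sin (a*u) / a^2"
  have "((\<lambda>u. u * sin (a*u)) has_integral (?F 1 - ?F 0)) {0..1}"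
    by (rule has_integral_01_of_deriv)
       (use a in \<open>auto intro!: derivative_eq_intros simp: field_simps power2_eq_square\<close>)
  then show ?case using a by (simp add: sin_moment_def)
next
  case (step m)
  let ?c = "real ((m + 2) * (m + 1)) / a^2"
  let ?F = "\<lambda>u. - (u^(m+2) * cos (a*u)) / a + real (m + 2) * (u^(m+1) * sin (a*u)) / a^2"
  have "((\<lambda>u. u^(m+2) * sin (a*u) + ?c * (u^m * sin (a*u))) has_integral (?F 1 - ?F 0)) {0..1}"
  proof (rule has_integral_01_of_deriv)
    fix u :: real
    show "(?F has_real_derivative u^(m+2) * sin (a*u) + ?c * (u^m * sin (a*u))) (at u)"
      using a by (auto intro!: derivative_eq_intros simp del: power_Suc
                       simp: field_simps power2_eq_square power_add)
  qed
  from has_integral_diff[OF this has_integral_mult_right[OF step, of ?c]]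
  show ?case
    using a sin_moment_Suc_Suc[OF a(1), of m] by simp
qed

definition cot_coeff :: "nat \<Rightarrow> nat \<Rightarrow> real" where
  "cot_coeff n j = - ((-1)^j * fact n / (fact (n - 2*j) * (2*pi)^(2*j+1)))"

lemma has_integral_pow_diff_sin:
  assumes n: "n \<ge> 1"
  shows "((\<lambda>u. (u^n - u) * sin (2*pi*real k*u)) has_integral
           (\<Sum>j=1..(n-1) div 2. cot_coeff n j / real k ^ (2*j+1))) {0..1}"
proof (cases "k = 0")
  case True
  then show ?thesis by simp
next
  case False
  define a where "a = 2*pi*real k"
  have a: "a \<noteq> 0" "sin a = 0" "cos a = 1"
    using False sin_npi[of "2*k"] cos_npi[of "2*k"] by (auto simp: a_def mult_ac)
  define t where "t j = ((-1)^j * fact n / (fact (n - 2*j) * a^(2*j+1)) :: real)" for j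
  have "(n + 1) div 2 = Suc ((n - 1) div 2)" using n by simp
  then have "sin_moment a n = - (\<Sum>j<Suc ((n-1) div 2). t j)"
    by (simp only: sin_moment_def t_def)
  also have "\<dots> = - (t 0 + (\<Sum>j=1..(n-1) div 2. t j))"
    by (simp only: sum.lessThan_Suc_shift sum.atLeast1_atMost_eq One_nat_def)
  also have "t 0 = 1 / a" by (simp add: t_def)
  finally have "sin_moment a n - sin_moment a 1 = (\<Sum>j=1..(n-1) div 2. - t j)"
    by (simp add: sin_moment_def sum_negf)
  also have "\<dots> = (\<Sum>j=1..(n-1) div 2. cot_coeff n j / real k ^ (2*j+1))"
    by (simp add: t_def cot_coeff_def a_def power_mult_distrib mult_ac)
  finally show ?thesis
    using has_integral_diff[OF has_integral_sin_moment[OF a, of n] has_integral_sin_moment[OF a, of 1]]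
    by (simp add: a_def left_diff_distrib mult_ac)
qed

section \<open>Abel means of the Fourier series of the cotangent\<close>

lemma sums_geometric_sin:
  fixes r t :: real assumes "0 \<le> r" "r < 1"
  shows "(\<lambda>k. r ^ k * sin (real k * t)) sums (r * sin t / (1 - 2 * r * cos t + r^2))"
proof -
  define z where "z = rcis r t"
  have "(\<lambda>k. Im (z ^ k)) sums Im (1 / (1 - z))"
    using assms by (intro sums_Im geometric_sums) (simp add: z_def)
  moreover have "Im (z ^ k) = r ^ k * sin (real k * t)" for k
    by (simp add: z_def DeMoivre2)
  moreover have "(1 - r * cos t)^2 + (r * sin t)^2 = 1 - 2 * r * cos t + r^2 * (sin t ^ 2 + cos t ^ 2)"
    by algebra
  then have "Im (1 / (1 - z)) = r * sin t / (1 - 2 * r * cos t + r^2)"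
    by (simp add: Im_divide z_def)
  ultimately show ?thesis by simp
qed

(* Abel means sum_{k>=1} 2 r^k sin(2 pi k u) of the Fourier series of cot(pi u). *)
definition poisson_cot :: "real \<Rightarrow> real \<Rightarrow> real" where
  "poisson_cot r u = 2 * r * sin (2*pi*u) / (1 - 2 * r * cos (2*pi*u) + r^2)"

lemma poisson_cot_denominator:
  "1 - 2 * r * cos (2*pi*u) + r^2 = (1 - r)^2 + 4 * r * sin (pi*u)^2"
proof -
  have "cos (2*pi*u) = 1 - 2 * sin (pi*u)^2"
    using cos_double_sin[of "pi*u"] by (simp add: mult.assoc)
  then show ?thesis unfolding \<open>cos (2*pi*u) = _\<close> by (simp add: power2_eq_square algebra_simps)
qed

lemma poisson_cot_sums:
  assumes "0 \<le> r" "r < 1"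
  shows "(\<lambda>k. 2 * r^k * sin (2*pi*real k*u)) sums poisson_cot r u"
  using sums_mult[OF sums_geometric_sin[OF assms, of "2*pi*u"], of 2]
  by (simp add: poisson_cot_def mult_ac)

lemma continuous_on_poisson_cot:
  assumes "0 \<le> r" "r < 1"
  shows "continuous_on A (poisson_cot r)"
proof -
  have "(1 - r)^2 + 4 * r * sin (pi*u)^2 > 0" for u
    using assms by (intro add_pos_nonneg) auto
  then have "1 - 2 * r * cos (2*pi*u) + r^2 \<noteq> 0" for u
    by (metis poisson_cot_denominator less_irrefl)
  then show ?thesis
    unfolding poisson_cot_def by (intro continuous_intros) auto
qed

lemma abs_poisson_cot_le:
  assumes "0 \<le> r" "0 < u" "u < 1"
  shows "\<bar>poisson_cot r u\<bar> \<le> \<bar>cot (pi * u)\<bar>"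
proof (cases "r = 0")
  case True
  then show ?thesis by (simp add: poisson_cot_def)
next
  case False
  with assms have r: "r > 0" by simp
  define s where "s = sin (pi * u)"
  have s: "s > 0" unfolding s_def using assms by (intro sin_gt_zero) auto
  then have num_pos: "4 * r * s^2 > 0" using r by simp
  then have denom_pos: "(1 - r)^2 + 4 * r * s^2 > 0" by (simp add: add_nonneg_pos)
  have "\<bar>poisson_cot r u\<bar> = 4 * r * s * \<bar>cos (pi * u)\<bar> / ((1 - r)^2 + 4 * r * s^2)"
    using sin_double[of "pi * u"] r s denom_pos
    unfolding poisson_cot_def poisson_cot_denominator s_def
    by (simp add: abs_mult mult.assoc)
  also have "\<dots> \<le> 4 * r * s * \<bar>cos (pi * u)\<bar> / (4 * r * s^2)"
    using num_pos denom_pos r s by (intro divide_left_mono) auto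
  also have "\<dots> = \<bar>cot (pi * u)\<bar>"
    using r s by (simp add: cot_def s_def abs_divide power2_eq_square)
  finally show ?thesis .
qed

lemma tendsto_poisson_cot:
  assumes "r \<longlonglongrightarrow> 1" "0 < u" "u < 1"
  shows "(\<lambda>m. poisson_cot (r m) u) \<longlonglongrightarrow> cot (pi * u)"
proof -
  have s: "sin (pi * u) > 0" using assms by (intro sin_gt_zero) auto
  have "(\<lambda>m. poisson_cot (r m) u) \<longlonglongrightarrow> 2 * 1 * sin (2*pi*u) / ((1 - 1)^2 + 4 * 1 * sin (pi*u)^2)"
    unfolding poisson_cot_def poisson_cot_denominator using s
    by (intro tendsto_intros assms(1)) auto
  also have "2 * 1 * sin (2*pi*u) / ((1 - 1)^2 + 4 * 1 * sin (pi*u)^2) = cot (pi * u)"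
    using sin_double[of "pi * u"] s by (simp add: cot_def mult.assoc power2_eq_square)
  finally show ?thesis .
qed

(* The k = 0 term vanishes because division by zero yields zero. *)
definition polylog :: "nat \<Rightarrow> real \<Rightarrow> real" where
  "polylog p r = (\<Sum>k. r^k / real k ^ p)"

lemma norm_power_divide_le:
  fixes r :: real assumes "0 \<le> r" "r \<le> 1"
  shows "norm (r^k / real k ^ p) \<le> inverse (real k ^ p)"
  using assms by (auto simp: abs_mult power_le_one divide_inverse intro!: mult_left_le_one_le)

lemma polylog_sums:
  assumes "p \<ge> 2" "0 \<le> r" "r \<le> 1"
  shows "(\<lambda>k. r^k / real k ^ p) sums polylog p r"
  unfolding polylog_def
  by (intro summable_sums summable_comparison_test[OF _ inverse_power_summable[OF assms(1)]])
     (use assms norm_power_divide_le in blast)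

lemma continuous_on_polylog:
  assumes "p \<ge> 2"
  shows "continuous_on {0..1} (polylog p)"
proof -
  have "uniform_limit {0..1} (\<lambda>N r. \<Sum>k<N. r^k / real k ^ p) (polylog p) sequentially"
    unfolding polylog_def[abs_def]
    by (rule Weierstrass_m_test[OF _ inverse_power_summable[OF assms]])
       (use norm_power_divide_le in auto)
  then show ?thesis
    unfolding divide_inverse
    by (rule uniform_limit_theorem[rotated]) (auto intro!: always_eventually continuous_intros)
qed

lemma zeta_of_nat_eq_polylog:
  assumes "p \<ge> 2"
  shows "zeta (of_nat p) = of_real (polylog p 1)"
proof -
  have "(\<lambda>k. 1 / real (Suc k) ^ p) sums polylog p 1"
    using polylog_sums[OF assms, of 1] sums_Suc_iff[of "\<lambda>k. 1 / real k ^ p"] assms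
    by (simp add: power_0_left)
  then have "(\<lambda>k. of_real (1 / real (Suc k) ^ p) :: complex) sums of_real (polylog p 1)"
    by (rule sums_of_real)
  moreover have "of_real (1 / real (Suc k) ^ p) = 1 / (of_nat (Suc k) :: complex) powr (of_nat p)" for k
    using assms by (subst powr_nat') auto
  ultimately show ?thesis
    unfolding zeta_def by (simp add: sums_iff)
qed

section \<open>Cotangent moments\<close>

lemma integral_pow_diff_poisson_cot:
  assumes n: "n \<ge> 1" and r: "0 \<le> r" "r < 1"
  shows "integral {0..1} (\<lambda>u. (u^n - u) * poisson_cot r u) =
           (\<Sum>j=1..(n-1) div 2. 2 * cot_coeff n j * polylog (2*j+1) r)"
proof -
  define f where "f k u = (u^n - u) * (2 * r^k * sin (2*pi*real k*u))" for k u
  define I where "I k = (\<Sum>j=1..(n-1) div 2. 2 * cot_coeff n j * (r^k / real k ^ (2*j+1)))" for k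
  have "(f k has_integral 2 * r^k * (\<Sum>j=1..(n-1) div 2. cot_coeff n j / real k ^ (2*j+1))) {0..1}" for k
    using has_integral_mult_right[OF has_integral_pow_diff_sin[OF n, of k], of "2 * r^k"]
    by (simp add: f_def[abs_def] mult_ac)
  then have f: "(f k has_integral I k) {0..1}" for k
    by (simp add: I_def sum_distrib_left mult_ac)
  have bound: "norm (\<Sum>k<N. f k u) \<le> 2 / (1 - r)" if u: "u \<in> {0..1}" for N u
  proof -
    have "0 \<le> u" "u \<le> 1" "0 \<le> u^n" "u^n \<le> 1" using u by (auto simp: power_le_one)
    then have "\<bar>u^n - u\<bar> \<le> 1" by linarith
    then have "norm (f k u) \<le> 2 * r^k" for k
      using r mult_mono[of "\<bar>u^n - u\<bar>" 1 "\<bar>sin (2*pi*real k*u)\<bar>" 1]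
      by (simp add: f_def abs_mult mult.left_commute mult_left_le)
    then have "norm (\<Sum>k<N. f k u) \<le> (\<Sum>k<N. 2 * r^k)"
      by (intro sum_norm_le) simp
    also have "\<dots> = 2 * (\<Sum>k<N. r^k)" by (simp add: sum_distrib_left)
    also have "\<dots> = 2 * (1 - r^N) / (1 - r)" using r by (simp add: sum_gp_strict)
    also have "\<dots> \<le> 2 / (1 - r)" using r by (simp add: divide_right_mono)
    finally show ?thesis .
  qed
  have "(\<lambda>k. f k u) sums ((u^n - u) * poisson_cot r u)" for u
    unfolding f_def by (intro sums_mult poisson_cot_sums r)
  from sums_integral_dominated(2)[OF f integrable_const_ivl bound this]
  have "I sums integral {0..1} (\<lambda>u. (u^n - u) * poisson_cot r u)" .
  moreover have "I sums (\<Sum>j=1..(n-1) div 2. 2 * cot_coeff n j * polylog (2*j+1) r)"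
    unfolding I_def using r by (intro sums_sum sums_mult polylog_sums) auto
  ultimately show ?thesis by (rule sums_unique2)
qed

lemma has_integral_pow_diff_cot:
  assumes n: "n \<ge> 1"
  shows "((\<lambda>u. (u^n - u) * cot (pi*u)) has_integral
           (\<Sum>j=1..(n-1) div 2. 2 * cot_coeff n j * polylog (2*j+1) 1)) {0..1}"
proof -
  define r :: "nat \<Rightarrow> real" where "r m = real m / real (Suc m)" for m
  have r: "0 \<le> r m" "r m < 1" for m
    by (auto simp: r_def)
  have r_lim: "r \<longlonglongrightarrow> 1"
    unfolding r_def by (rule LIMSEQ_n_over_Suc_n)
  define f where "f m u = (u^n - u) * poisson_cot (r m) u" for m u
  have f: "f m integrable_on {0..1}" for m
    unfolding f_def using r[of m]
    by (intro integrable_continuous_interval continuous_intros continuous_on_poisson_cot) auto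
  have bound: "norm (f m u) \<le> real n" if "u \<in> {0..1}" for m u
  proof (cases "u = 0 \<or> u = 1")
    case True
    then show ?thesis using n by (auto simp: f_def power_0_left)
  next
    case False
    then have "0 < u" "u < 1" using that by auto
    then have "\<bar>f m u\<bar> \<le> \<bar>(u^n - u) * cot (pi * u)\<bar>"
      unfolding f_def abs_mult using abs_poisson_cot_le r by (intro mult_left_mono) auto
    also have "\<dots> \<le> real n" using abs_pow_diff_cot_le[of u n] that n by simp
    finally show ?thesis by simp
  qed
  have lim: "(\<lambda>m. f m u) \<longlonglongrightarrow> (u^n - u) * cot (pi * u)" if "u \<in> {0..1}" for u
  proof (cases "u = 0 \<or> u = 1")
    case True
    then show ?thesis using n by (auto simp: f_def power_0_left)
  next
    case False
    then show ?thesis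
      using that unfolding f_def by (intro tendsto_intros tendsto_poisson_cot r_lim) auto
  qed
  note dc = dominated_convergence[OF f integrable_const_ivl bound lim]
  have "(\<lambda>m. integral {0..1} (f m)) \<longlonglongrightarrow> (\<Sum>j=1..(n-1) div 2. 2 * cot_coeff n j * polylog (2*j+1) 1)"
    unfolding f_def integral_pow_diff_poisson_cot[OF n r]
    by (intro tendsto_intros continuous_on_tendsto_compose[OF continuous_on_polylog r_lim])
       (use r in \<open>auto intro!: always_eventually less_imp_le\<close>)
  with dc(2) have "integral {0..1} (\<lambda>u. (u^n - u) * cot (pi*u)) =
      (\<Sum>j=1..(n-1) div 2. 2 * cot_coeff n j * polylog (2*j+1) 1)"
    by (rule LIMSEQ_unique)
  with dc(1) show ?thesis
    by (simp add: has_integral_iff)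
qed

definition cot_moment :: "nat \<Rightarrow> real" where
  "cot_moment n = integral {0..1} (\<lambda>u. (u^n - u) * cot (pi*u))"

lemma has_integral_cot_moment:
  assumes "n \<ge> 1"
  shows "((\<lambda>u. (u^n - u) * cot (pi*u)) has_integral cot_moment n) {0..1}"
  unfolding cot_moment_def using has_integral_pow_diff_cot[OF assms]
  by (blast intro: has_integral_integral)

lemma power_div_fact_cot_moment:
  fixes c :: complex assumes "n \<ge> 1"
  shows "c^n / fact n * of_real (cot_moment n) =
    - (1 / of_real pi) * c^n * (\<Sum>j=1..(n-1) div 2.
        (-1)^j / (2 * of_real pi)^(2*j) / fact (n - 2*j) * zeta (of_nat (2*j+1)))"
proof -
  have "cot_moment n = (\<Sum>j=1..(n-1) div 2. 2 * cot_coeff n j * polylog (2*j+1) 1)"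
    unfolding cot_moment_def using has_integral_pow_diff_cot[OF assms] by (rule integral_unique)
  then have "c^n / fact n * of_real (cot_moment n) =
      (\<Sum>j=1..(n-1) div 2. c^n / fact n * of_real (2 * cot_coeff n j * polylog (2*j+1) 1))"
    by (simp add: sum_distrib_left)
  also have "\<dots> = (\<Sum>j=1..(n-1) div 2. - (1 / of_real pi) * c^n *
        ((-1)^j / (2 * of_real pi)^(2*j) / fact (n - 2*j) * zeta (of_nat (2*j+1))))"
  proof (intro sum.cong refl)
    fix j assume "j \<in> {1..(n-1) div 2}"
    then have "zeta (of_nat (2*j+1)) = of_real (polylog (2*j+1) 1)"
      by (intro zeta_of_nat_eq_polylog) auto
    then show "c^n / fact n * of_real (2 * cot_coeff n j * polylog (2*j+1) 1) =
        - (1 / of_real pi) * c^n * ((-1)^j / (2 * of_real pi)^(2*j) / fact (n - 2*j) * zeta (of_nat (2*j+1)))"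
      by (simp add: cot_coeff_def field_simps power_add)
  qed
  also have "\<dots> = - (1 / of_real pi) * c^n * (\<Sum>j=1..(n-1) div 2.
        (-1)^j / (2 * of_real pi)^(2*j) / fact (n - 2*j) * zeta (of_nat (2*j+1)))"
    by (simp add: sum_distrib_left)
  finally show ?thesis .
qed

lemma cot_integral_power_series:
  fixes a :: "nat \<Rightarrow> complex" and h :: "real \<Rightarrow> complex"
  assumes a0: "a 0 = 0" and summable: "summable (\<lambda>n. norm (a n) * real n)"
    and h: "\<And>u. u \<in> {0..1} \<Longrightarrow> (\<lambda>n. a n * of_real (u^n - u)) sums h u"
  shows "(\<lambda>u. h u * of_real (cot (pi*u))) integrable_on {0..1}"
    and "(\<lambda>n. a n * of_real (cot_moment n)) sums integral {0..1} (\<lambda>u. h u * of_real (cot (pi*u)))"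
proof -
  define f where "f n u = a n * of_real ((u^n - u) * cot (pi*u))" for n u
  have f: "(f n has_integral a n * of_real (cot_moment n)) {0..1}" for n
  proof (cases "n = 0")
    case True
    then show ?thesis using a0 by (simp add: f_def[abs_def])
  next
    case False
    then show ?thesis
      unfolding f_def[abs_def]
      by (intro has_integral_mult_right has_integral_of_real has_integral_cot_moment) simp
  qed
  have bound: "norm (\<Sum>n<N. f n u) \<le> (\<Sum>n. norm (a n) * real n)" if "u \<in> {0..1}" for N u
  proof -
    have "norm (f n u) \<le> norm (a n) * real n" for n
    proof (cases "n = 0")
      case True
      then show ?thesis using a0 by (simp add: f_def)
    next
      case False
      have "norm (f n u) = norm (a n) * \<bar>(u^n - u) * cot (pi*u)\<bar>"
        by (simp only: f_def norm_mult norm_of_real)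
      also have "\<dots> \<le> norm (a n) * real n"
        using abs_pow_diff_cot_le[of u n] that False by (intro mult_left_mono) auto
      finally show ?thesis .
    qed
    then have "norm (\<Sum>n<N. f n u) \<le> (\<Sum>n<N. norm (a n) * real n)"
      by (intro sum_norm_le)
    also have "\<dots> \<le> (\<Sum>n. norm (a n) * real n)"
      using summable by (intro sum_le_suminf) auto
    finally show ?thesis .
  qed
  have "(\<lambda>n. f n u) sums (h u * of_real (cot (pi*u)))" if "u \<in> {0..1}" for u
    using sums_mult2[OF h[OF that], of "of_real (cot (pi*u))"] by (simp add: f_def mult.assoc)
  note series = sums_integral_dominated[OF f integrable_const_ivl bound this]
  show "(\<lambda>u. h u * of_real (cot (pi*u))) integrable_on {0..1}"
    by (rule series(1))
  show "(\<lambda>n. a n * of_real (cot_moment n)) sums integral {0..1} (\<lambda>u. h u * of_real (cot (pi*u)))"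
    by (rule series(2))
qed

lemma sinh_cot_series:
  fixes c :: complex
  defines "h \<equiv> \<lambda>u::real. sinh (c * of_real u) - of_real u * sinh c"
  shows "(\<lambda>u. h u * of_real (cot (pi*u))) integrable_on {0..1}"
    and "(\<lambda>k. - (1 / of_real pi) * c^(2*k+1) * (\<Sum>j=1..k.
            (-1)^j / (2 * of_real pi)^(2*j) / fact (2*k+1-2*j) * zeta (of_nat (2*j+1))))
          sums integral {0..1} (\<lambda>u. h u * of_real (cot (pi*u)))"
proof -
  define a where "a n = (if even n then 0 else c^n / fact n)" for n
  have h: "(\<lambda>n. a n * of_real (u^n - u)) sums h u" for u
  proof -
    have "(\<lambda>n. (if even n then 0 else (c * of_real u)^n /\<^sub>R fact n) -
               (if even n then 0 else c^n /\<^sub>R fact n) * of_real u) sums (sinh (c * of_real u) - sinh c * of_real u)"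
      by (intro sums_diff sums_mult2 sinh_converges)
    moreover have "(if even n then 0 else (c * of_real u)^n /\<^sub>R fact n) -
               (if even n then 0 else c^n /\<^sub>R fact n) * of_real u = a n * of_real (u^n - u)" for n
      by (cases "even n") (simp_all add: a_def power_mult_distrib scaleR_conv_of_real field_simps)
    ultimately show ?thesis
      by (simp add: h_def mult.commute)
  qed
  have "summable (\<lambda>n. norm (a n) * real n)"
    by (rule summable_norm_times_index[of _ c]) (simp add: a_def norm_divide norm_power)
  note series = cot_integral_power_series[OF _ this h]
  show "(\<lambda>u. h u * of_real (cot (pi*u))) integrable_on {0..1}"
    using series(1) by (simp add: a_def)
  have "(\<lambda>k. a (2*k+1) * of_real (cot_moment (2*k+1))) sums integral {0..1} (\<lambda>u. h u * of_real (cot (pi*u)))"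
    using series(2) by (intro sums_odd_terms) (simp_all add: a_def)
  then show "(\<lambda>k. - (1 / of_real pi) * c^(2*k+1) * (\<Sum>j=1..k.
            (-1)^j / (2 * of_real pi)^(2*j) / fact (2*k+1-2*j) * zeta (of_nat (2*j+1))))
          sums integral {0..1} (\<lambda>u. h u * of_real (cot (pi*u)))"
    using power_div_fact_cot_moment[of "2*k+1" c for k] by (simp add: a_def)
qed

lemma cosh_cot_series:
  fixes c :: complex
  defines "h \<equiv> \<lambda>u::real. cosh (c * of_real u) - 1 - of_real u * (cosh c - 1)"
  shows "(\<lambda>u. h u * of_real (cot (pi*u))) integrable_on {0..1}"
    and "(\<lambda>k. (1 / of_real pi) * c^(2*k+2) * (\<Sum>j=1..k.
            (-1)^j / (2 * of_real pi)^(2*j) / fact (2*k+2-2*j) * zeta (of_nat (2*j+1))))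
          sums - integral {0..1} (\<lambda>u. h u * of_real (cot (pi*u)))"
proof -
  define a where "a n = (if even n \<and> n \<noteq> 0 then c^n / fact n else 0)" for n
  have h: "(\<lambda>n. a n * of_real (u^n - u)) sums h u" for u
  proof -
    let ?t = "\<lambda>x n. (if even n then x^n /\<^sub>R fact n else 0) - (if n = 0 then 1 else 0)"
    have "(\<lambda>n. ?t (c * of_real u) n - ?t c n * of_real u) sums
        ((cosh (c * of_real u) - 1) - (cosh c - 1) * of_real u)"
      using sums_single[of 0 "\<lambda>_. 1::complex"]
      by (intro sums_diff sums_mult2 cosh_converges) auto
    moreover have "?t (c * of_real u) n - ?t c n * of_real u = a n * of_real (u^n - u)" for n
      by (cases "even n"; cases "n = 0")
         (simp_all add: a_def power_mult_distrib scaleR_conv_of_real field_simps)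
    ultimately show ?thesis
      by (simp add: h_def mult.commute)
  qed
  have "summable (\<lambda>n. norm (a n) * real n)"
    by (rule summable_norm_times_index[of _ c]) (simp add: a_def norm_divide norm_power)
  note series = cot_integral_power_series[OF _ this h]
  show "(\<lambda>u. h u * of_real (cot (pi*u))) integrable_on {0..1}"
    using series(1) by (simp add: a_def)
  have "(\<lambda>k. a (2*k+2) * of_real (cot_moment (2*k+2))) sums integral {0..1} (\<lambda>u. h u * of_real (cot (pi*u)))"
    using series(2) by (intro sums_even_terms_Suc) (simp_all add: a_def)
  from sums_minus[OF this]
  show "(\<lambda>k. (1 / of_real pi) * c^(2*k+2) * (\<Sum>j=1..k.
            (-1)^j / (2 * of_real pi)^(2*j) / fact (2*k+2-2*j) * zeta (of_nat (2*j+1))))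
          sums - integral {0..1} (\<lambda>u. h u * of_real (cot (pi*u)))"
    using power_div_fact_cot_moment[of "2*k+2" c for k] by (simp add: a_def)
qed

lemma cot_integral_reflection:
  fixes c :: complex assumes "sinh c \<noteq> 0"
  defines "F \<equiv> \<lambda>u::real. sinh (c * of_real u) / sinh c - of_real u"
    and "h \<equiv> \<lambda>u::real. cosh (c * of_real u) - 1 - of_real u * (cosh c - 1)"
    and "ct \<equiv> \<lambda>u::real. of_real (cot (pi * u)) :: complex"
  shows "(1 - cosh c) * integral {0..1} (\<lambda>u. F u * ct u) = - integral {0..1} (\<lambda>u. h u * ct u)"
proof -
  have F_int: "(\<lambda>u. F u * ct u) integrable_on {0..1}"
    using integrable_on_mult_left[OF sinh_cot_series(1)[of c], of "1 / sinh c"] assms(1)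
    by (simp add: F_def ct_def field_simps)
  have h_int: "(\<lambda>u. h u * ct u) integrable_on {0..1}"
    using cosh_cot_series(1)[of c] by (simp add: h_def ct_def)
  have "F (1 - u) * ct (1 - u) = cosh c * (F u * ct u) - h u * ct u" for u
  proof -
    have "ct (1 - u) = - ct u"
      by (simp add: ct_def right_diff_distrib cot_def sin_diff cos_diff)
    then show ?thesis
      using assms(1) by (simp add: F_def h_def sinh_diff field_simps)
  qed
  then have "integral {0..1} (\<lambda>u. F u * ct u) =
      integral {0..1} (\<lambda>u. cosh c * (F u * ct u) - h u * ct u)"
    using integral_reflect_interval[OF F_int] by simp
  also have "\<dots> = cosh c * integral {0..1} (\<lambda>u. F u * ct u) - integral {0..1} (\<lambda>u. h u * ct u)"
    using F_int h_int by (simp add: integral_diff integrable_on_mult_right)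
  finally show ?thesis by (simp add: algebra_simps)
qed

theorem mainTheorem6:
  fixes c :: complex
  assumes "c \<noteq> 0" and "sinh c \<noteq> 0"
  defines "J \<equiv> integral {0..1::real}
             (\<lambda>u. (sinh (c * of_real u) / sinh c - of_real u) * of_real (cot (pi * u)))"
  shows "((\<lambda>k. - (1 / of_real pi) * c ^ (2*k+1) *
            (\<Sum>j=1..k. (-1) ^ j / (2 * of_real pi) ^ (2*j) / fact (2*k+1-2*j)
                         * zeta (of_nat (2*j+1))))
           sums (sinh c * J)) \<and>
         ((\<lambda>k. (1 / of_real pi) * c ^ (2*k+2) *
            (\<Sum>j=1..k. (-1) ^ j / (2 * of_real pi) ^ (2*j) / fact (2*k+2-2*j)
                         * zeta (of_nat (2*j+1))))
           sums ((1 - cosh c) * J)) \<and>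
         ((\<lambda>k. (1 / of_real pi) *
            (\<Sum>j=1..k. (-1) ^ j / (2 * of_real pi) ^ (2*j) * zeta (of_nat (2*j+1)) *
               (- (c ^ (2*k+1)) / fact (2*k+1-2*j) + c ^ (2*k+2) / fact (2*k+2-2*j))))
           sums (- (exp (- c) - 1) * J))"
  (* The hypothesis c \<noteq> 0 is implied by sinh c \<noteq> 0. *)
proof -
  define S where "S m k = (\<Sum>j=1..k. (-1) ^ j / (2 * of_real pi) ^ (2*j) / fact (m - 2*j)
                                        * zeta (of_nat (2*j+1)))" for m k
  have "sinh c * J = integral {0..1}
      (\<lambda>u. (sinh (c * of_real u) - of_real u * sinh c) * of_real (cot (pi * u)))"
    unfolding J_def integral_mult_right[symmetric] using assms(2)
    by (intro integral_cong) (simp add: field_simps)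
  then have odd: "(\<lambda>k. - (1 / of_real pi) * c ^ (2*k+1) * S (2*k+1) k) sums (sinh c * J)"
    using sinh_cot_series(2)[of c] by (simp add: S_def)
  have even: "(\<lambda>k. (1 / of_real pi) * c ^ (2*k+2) * S (2*k+2) k) sums ((1 - cosh c) * J)"
    using cosh_cot_series(2)[of c] cot_integral_reflection[OF assms(2)] by (simp add: S_def J_def)
  have terms: "(1 / of_real pi) *
        (\<Sum>j=1..k. (-1) ^ j / (2 * of_real pi) ^ (2*j) * zeta (of_nat (2*j+1)) *
           (- (c ^ (2*k+1)) / fact (2*k+1-2*j) + c ^ (2*k+2) / fact (2*k+2-2*j))) =
      - (1 / of_real pi) * c ^ (2*k+1) * S (2*k+1) k + (1 / of_real pi) * c ^ (2*k+2) * S (2*k+2) k"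
    for k by (simp add: S_def sum_distrib_left sum_negf[symmetric] sum.distrib[symmetric] algebra_simps)
  have "sinh c * J + (1 - cosh c) * J = - (exp (- c) - 1) * J"
    using cosh_minus_sinh[of c] by (simp add: algebra_simps)
  with odd even sums_add[OF odd even] show ?thesis
    unfolding terms S_def by simp
qed

end
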